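(* Define $J_T(\pi)=g_T(\pi)$ and, for $k=T-1,\dots,0$, $$J_k(\pi)=\inf_{u\in\mathcal U}\Big\{g_k(\pi,u)+E_{Y_{k+1}}\big[J_{k+1}(\Pi(\pi,u,y_{k+1}))\,\big|\,\pi,u\big]\Big\},$$ where $Y_{k+1}$ has (mass or density) function $p(y\mid\pi,u)=\sum_{i,j}B^i(y,u)A^{ij}(u)\pi(j)$. Then for every $0\le k\le T$, $J_k$ is concave on $\Delta^N$.
   Context: Controlled HMM: states $\{e_1,\dots,e_N\}$, finite control set $\mathcal U$, transition probabilities $A^{ij}(u)=p(X_{k+1}=e_i\mid X_k=e_j,U_k=u)$, measurement space $\mathcal Y$ (finite, or with densities w.r.t. a reference measure), measurement kernels $B^i(y,u)=p(Y_{k}=y\mid X_{k}=e_i,U_{k-1}=u)$. $\Delta^N=\{x\in\mathbb R^N:\sum_i x(i)=1,\ 0\le x(i)\le1\}$. Filter map: $\Pi(\pi,u,y)(i)=\frac{B^i(y,u)\sum_jA^{ij}(u)\pi(j)}{\sum_\ell\sum_jB^\ell(y,u)A^{\ell j}(u)\pi(j)}$. Costs $c_T:\{e_i\}\to[0,\infty)$, $c_k:\{e_i\}\times\mathcal U\to[0,\infty)$. Define $\tilde g_T(\pi)=-\sum_i\pi(i)\log\pi(i)$, $\tilde g_k(\pi,u)=-\sum_{i,j=1}^N A^{ij}(u)\pi(j)\log\frac{A^{ij}(u)\pi(j)}{\sum_{\ell=1}^N A^{i\ell}(u)\pi(\ell)}$ (with $0\log0=0$), $g_k(\pi,u)=\tilde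 g_k(\pi,u)+\sum_i\pi(i)c_k(e_i,u)$, $g_T(\pi)=\tilde g_T(\pi)+\sum_i\pi(i)c_T(e_i)$. $J_k$ is the value function of the belief-state reformulation of the active smoothing problem (minimising smoother entropy plus expected costs). *)

theory Defs
  imports "HOL-Analysis.Analysis"
begin

text \<open>Belief states are vectors pi :: real^'n, the N hidden states being the elements
of the finite type 'n. A u i j = p(X_{k+1}=e_i | X_k=e_j, U_k=u).
B u i y = B^i(y,u), a density with respect to the reference measure M on 'y
(M = count_space for a finite measurement space).\<close>

definition belief_simplex :: "(real^'n::finite) set" where
  "belief_simplex = {x. (\<forall>i. 0 \<le> x $ i \<and> x $ i \<le> 1) \<and> (\<Sum>i\<in>UNIV. x $ i) = 1}"

definition plogq :: "real \<Rightarrow> real \<Rightarrow> real" where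
  "plogq a b = (if a = 0 then 0 else a * ln (a / b))"

definition filt :: "('u \<Rightarrow> 'n \<Rightarrow> 'n \<Rightarrow> real) \<Rightarrow> ('u \<Rightarrow> 'n \<Rightarrow> 'y \<Rightarrow> real)
    \<Rightarrow> real^'n::finite \<Rightarrow> 'u \<Rightarrow> 'y \<Rightarrow> real^'n" where
  "filt A B p u y = (\<chi> i. B u i y * (\<Sum>j\<in>UNIV. A u i j * p $ j) /
      (\<Sum>l\<in>UNIV. \<Sum>j\<in>UNIV. B u l y * A u l j * p $ j))"

definition obs_density :: "('u \<Rightarrow> 'n \<Rightarrow> 'n \<Rightarrow> real) \<Rightarrow> ('u \<Rightarrow> 'n \<Rightarrow> 'y \<Rightarrow> real)
    \<Rightarrow> real^'n::finite \<Rightarrow> 'u \<Rightarrow> 'y \<Rightarrow> real" where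
  "obs_density A B p u y = (\<Sum>i\<in>UNIV. \<Sum>j\<in>UNIV. B u i y * A u i j * p $ j)"

definition gT :: "('n \<Rightarrow> real) \<Rightarrow> real^'n::finite \<Rightarrow> real" where
  "gT cT p = - (\<Sum>i\<in>UNIV. plogq (p $ i) 1) + (\<Sum>i\<in>UNIV. p $ i * cT i)"

text \<open>Running stage cost g_k; c k i u = c_k(e_i,u).\<close>
definition gk :: "('u \<Rightarrow> 'n \<Rightarrow> 'n \<Rightarrow> real) \<Rightarrow> (nat \<Rightarrow> 'n \<Rightarrow> 'u \<Rightarrow> real)
    \<Rightarrow> nat \<Rightarrow> real^'n::finite \<Rightarrow> 'u \<Rightarrow> real" where
  "gk A c k p u = - (\<Sum>i\<in>UNIV. \<Sum>j\<in>UNIV.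
        plogq (A u i j * p $ j) (\<Sum>l\<in>UNIV. A u i l * p $ l))
     + (\<Sum>i\<in>UNIV. p $ i * c k i u)"

text \<open>Jrem T n = J_{T-n}: value function with n stages remaining.\<close>
fun Jrem :: "('u::finite \<Rightarrow> 'n \<Rightarrow> 'n \<Rightarrow> real) \<Rightarrow> ('u \<Rightarrow> 'n \<Rightarrow> 'y \<Rightarrow> real) \<Rightarrow> 'y measure
    \<Rightarrow> ('n \<Rightarrow> real) \<Rightarrow> (nat \<Rightarrow> 'n \<Rightarrow> 'u \<Rightarrow> real) \<Rightarrow> nat \<Rightarrow> nat \<Rightarrow> real^'n::finite \<Rightarrow> real" where
  "Jrem A B M cT c T 0 p = gT cT p"
| "Jrem A B M cT c T (Suc n) p =
     Min (range (\<lambda>u. gk A c (T - Suc n) p u +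
        (\<integral>y. Jrem A B M cT c T n (filt A B p u y) * obs_density A B p u y \<partial>M)))"

definition Jval :: "('u::finite \<Rightarrow> 'n \<Rightarrow> 'n \<Rightarrow> real) \<Rightarrow> ('u \<Rightarrow> 'n \<Rightarrow> 'y \<Rightarrow> real) \<Rightarrow> 'y measure
    \<Rightarrow> ('n \<Rightarrow> real) \<Rightarrow> (nat \<Rightarrow> 'n \<Rightarrow> 'u \<Rightarrow> real) \<Rightarrow> nat \<Rightarrow> nat \<Rightarrow> real^'n::finite \<Rightarrow> real" where
  "Jval A B M cT c T k = Jrem A B M cT c T (T - k)"

end

theory Submission
  imports Defs "HOL-Real_Asymp.Real_Asymp"
begin

text \<open>Write w(p,y) for the unnormalised filter, w(p,y)_i = B^i(y,u) (A(u) p)_i. It is linear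
  in p, its mass is the predicted density p(y | p,u), and the filter is w / p(y | p,u). Hence
  J(Pi(p,u,y)) p(y | p,u) = perspective J (w(p,y)), where perspective J q = |q| J(q / |q|).
  Perspectives of concave functions are concave, so the expected cost-to-go is concave in p
  whenever J is. The same device gives the stage cost: the conditional entropy in g_k is the sum
  over i of the perspective of the Shannon entropy at the vector (A^ij(u) p(j))_j, linear in p.
  Concavity is then preserved by the finite minimum over controls, and backward induction
  concludes. Continuity of J_k is carried along the induction: it makes J_k bounded on the
  compact simplex, which yields measurability and integrability of the integrand, and through
  dominated convergence the continuity of the next value function.\<close>

lemma concave_on_subset: "concave_on T f \<Longrightarrow> S \<subseteq> T \<Longrightarrow> convex S \<Longrightarrow> concave_on S f"
  unfolding concave_on_def by (rule convex_on_subset)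

lemma concave_on_linear:
  assumes "linear f" "convex S"
  shows "concave_on S f"
  using assms by (simp add: concave_on_iff linear_add linear_scale)

lemma concave_on_compose_linear:
  assumes f: "concave_on T f" and L: "linear L" and S: "convex S" and LS: "L ` S \<subseteq> T"
  shows "concave_on S (\<lambda>x. f (L x))"
  unfolding concave_on_iff
proof (intro conjI ballI allI impI S)
  fix x y and u v :: real assume "x \<in> S" "y \<in> S" "0 \<le> u" "0 \<le> v" "u + v = 1"
  then show "u * f (L x) + v * f (L y) \<le> f (L (u *\<^sub>R x + v *\<^sub>R y))"
    using f LS unfolding concave_on_iff linear_add[OF L] linear_scale[OF L] by blast
qed

lemma concave_on_sum_fun:
  assumes "finite I" "convex S" "\<And>i. i \<in> I \<Longrightarrow> concave_on S (f i)"
  shows "concave_on S (\<lambda>x. \<Sum>i\<in>I. f i x)"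
  using assms(1,3)
proof (induction I rule: finite_induct)
  case empty
  then show ?case using assms(2) by (simp add: concave_on_const)
next
  case (insert i I)
  then show ?case by (simp add: concave_on_add)
qed

lemma concave_on_min:
  assumes "concave_on S f" "concave_on S g"
  shows "concave_on S (\<lambda>x. min (f x) (g x))"
  unfolding concave_on_iff
proof (intro conjI ballI allI impI)
  show "convex S" using assms by (simp add: concave_on_iff)
  fix x y and u v :: real assume "x \<in> S" "y \<in> S" and uv: "0 \<le> u" "0 \<le> v" "u + v = 1"
  then have "u * f x + v * f y \<le> f (u *\<^sub>R x + v *\<^sub>R y)"
    and "u * g x + v * g y \<le> g (u *\<^sub>R x + v *\<^sub>R y)"
    using assms unfolding concave_on_iff by blast+
  moreover have "u * min (f x) (g x) \<le> u * f x" "u * min (f x) (g x) \<le> u * g x"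
    and "v * min (f y) (g y) \<le> v * f y" "v * min (f y) (g y) \<le> v * g y"
    using uv by (simp_all add: mult_left_mono)
  ultimately show "u * min (f x) (g x) + v * min (f y) (g y) \<le> min (f (u *\<^sub>R x + v *\<^sub>R y)) (g (u *\<^sub>R x + v *\<^sub>R y))"
    by linarith
qed

lemma concave_on_Min:
  assumes "finite U" "U \<noteq> {}" "\<And>u. u \<in> U \<Longrightarrow> concave_on S (f u)"
  shows "concave_on S (\<lambda>x. Min ((\<lambda>u. f u x) ` U))"
  using assms
proof (induction U rule: finite_ne_induct)
  case (insert u U)
  then show ?case by (simp add: concave_on_min)
qed simp

lemma continuous_on_Min:
  fixes f :: "'u \<Rightarrow> 'a::topological_space \<Rightarrow> 'b::linorder_topology"
  assumes "finite U" "U \<noteq> {}" "\<And>u. u \<in> U \<Longrightarrow> continuous_on S (f u)"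
  shows "continuous_on S (\<lambda>x. Min ((\<lambda>u. f u x) ` U))"
  using assms
proof (induction U rule: finite_ne_induct)
  case (insert u U)
  then have "continuous_on S (\<lambda>x. min (f u x) (Min ((\<lambda>u. f u x) ` U)))"
    by (intro continuous_on_min) auto
  then show ?case using insert by simp
qed simp

lemma concave_on_integral:
  assumes S: "convex S"
    and concave: "\<And>y. y \<in> space M \<Longrightarrow> concave_on S (\<lambda>x. f x y)"
    and integrable: "\<And>x. x \<in> S \<Longrightarrow> integrable M (f x)"
  shows "concave_on S (\<lambda>x. \<integral>y. f x y \<partial>M)"
  unfolding concave_on_iff
proof (intro conjI ballI allI impI S)
  fix x1 x2 and u v :: real
  assume x: "x1 \<in> S" "x2 \<in> S" and uv: "0 \<le> u" "0 \<le> v" "u + v = 1"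
  then have "u *\<^sub>R x1 + v *\<^sub>R x2 \<in> S" using S by (simp add: convexD)
  then have "(\<integral>y. u * f x1 y + v * f x2 y \<partial>M) \<le> (\<integral>y. f (u *\<^sub>R x1 + v *\<^sub>R x2) y \<partial>M)"
    using x uv concave integrable unfolding concave_on_iff
    by (intro Bochner_Integration.integral_mono) auto
  then show "u * (\<integral>y. f x1 y \<partial>M) + v * (\<integral>y. f x2 y \<partial>M) \<le> (\<integral>y. f (u *\<^sub>R x1 + v *\<^sub>R x2) y \<partial>M)"
    using x integrable by simp
qed

lemma continuous_on_integral_dominated:
  fixes f :: "'a::metric_space \<Rightarrow> 'y \<Rightarrow> real"
  assumes measurable: "\<And>x. x \<in> S \<Longrightarrow> f x \<in> borel_measurable M"
    and h: "integrable M h"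
    and bound: "\<And>x y. x \<in> S \<Longrightarrow> y \<in> space M \<Longrightarrow> \<bar>f x y\<bar> \<le> h y"
    and continuous: "\<And>y. y \<in> space M \<Longrightarrow> continuous_on S (\<lambda>x. f x y)"
  shows "continuous_on S (\<lambda>x. \<integral>y. f x y \<partial>M)"
proof (rule continuous_on_sequentiallyI)
  fix xs a assume xs: "\<forall>n. xs n \<in> S" and a: "a \<in> S" and lim: "xs \<longlonglongrightarrow> a"
  show "(\<lambda>n. \<integral>y. f (xs n) y \<partial>M) \<longlonglongrightarrow> (\<integral>y. f a y \<partial>M)"
  proof (rule integral_dominated_convergence[OF measurable[OF a] _ h])
    show "f (xs n) \<in> borel_measurable M" for n
      using xs measurable by blast
    show "AE y in M. (\<lambda>n. f (xs n) y) \<longlonglongrightarrow> f a y"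
      using continuous xs a lim by (auto simp: continuous_on_sequentially comp_def)
    show "AE y in M. norm (f (xs n) y) \<le> h y" for n
      using xs bound by auto
  qed
qed

lemma borel_measurable_vec_lambda:
  fixes f :: "'y \<Rightarrow> 'n::finite \<Rightarrow> real"
  assumes "\<And>i. (\<lambda>y. f y i) \<in> borel_measurable M"
  shows "(\<lambda>y. \<chi> i. f y i) \<in> borel_measurable M"
proof (rule borel_measurable_euclidean_space[THEN iffD2], intro ballI)
  fix b :: "real^'n" assume "b \<in> Basis"
  then obtain j where "b = axis j 1" by (auto simp: Basis_vec_def)
  then show "(\<lambda>y. (\<chi> i. f y i) \<bullet> b) \<in> borel_measurable M"
    using assms by (simp add: inner_axis)
qed

lemma continuous_on_x_ln_x: "continuous_on {0..} (\<lambda>x::real. x * ln x)"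
  unfolding continuous_on_eq_continuous_within
proof
  fix x :: real assume "x \<in> {0..}"
  show "continuous (at x within {0..}) (\<lambda>x. x * ln x)"
  proof (cases "x = 0")
    case True
    have "((\<lambda>x::real. x * ln x) \<longlongrightarrow> 0) (at_right 0)" by real_asymp
    then show ?thesis using True by (simp add: continuous_within at_within_Ici_at_right)
  next
    case False
    with \<open>x \<in> {0..}\<close> have "isCont (\<lambda>x. x * ln x) x" by (auto intro!: continuous_intros)
    then show ?thesis by (rule continuous_at_imp_continuous_at_within)
  qed
qed

lemma convex_on_x_ln_x: "convex_on {0..} (\<lambda>x::real. x * ln x)"
proof (rule convex_on_linorderI)
  have pos: "convex_on {0<..} (\<lambda>x::real. x * ln x)"
    by (rule f''_ge0_imp_convex[where f' = "\<lambda>x. ln x + 1" and f'' = "\<lambda>x. 1 / x"])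
       (auto intro!: derivative_eq_intros)
  fix t x y :: real
  assume t: "0 < t" "t < 1" and xy: "x \<in> {0..}" "y \<in> {0..}" "x < y"
  show "((1 - t) *\<^sub>R x + t *\<^sub>R y) * ln ((1 - t) *\<^sub>R x + t *\<^sub>R y)
      \<le> (1 - t) * (x * ln x) + t * (y * ln y)"
  proof (cases "x = 0")
    case True
    \<comment> \<open>the inequality reduces to \<open>ln t \<le> 0\<close>\<close>
    have "t * y * ln t \<le> 0" using t xy by (intro mult_nonneg_nonpos) auto
    then show ?thesis using True t xy by (simp add: ln_mult algebra_simps)
  next
    case False
    then show ?thesis using t xy convex_onD[OF pos, of t x y] by simp
  qed
qed simp

lemma belief_simplex_eq: "belief_simplex = {0..} \<inter> {p :: real^'n::finite. (\<Sum>i\<in>UNIV. p $ i) = 1}"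
proof -
  have "p $ i \<le> 1" if "0 \<le> p" "(\<Sum>i\<in>UNIV. p $ i) = 1" for p :: "real^'n" and i
    using that member_le_sum[of i UNIV "\<lambda>i. p $ i"] by (simp add: less_eq_vec_def)
  then show ?thesis by (auto simp: belief_simplex_def less_eq_vec_def)
qed

lemma convex_nonneg_vec: "convex ({0..} :: (real^'n::finite) set)"
  by (auto simp: convex_def less_eq_vec_def)

lemma belief_simplex_subset_nonneg: "belief_simplex \<subseteq> {0..}"
  by (simp add: belief_simplex_eq)

lemma sum_belief_simplex: "p \<in> belief_simplex \<Longrightarrow> (\<Sum>i\<in>UNIV. p $ i) = 1"
  by (simp add: belief_simplex_def)

lemma convex_belief_simplex: "convex (belief_simplex :: (real^'n::finite) set)"
  unfolding belief_simplex_eq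
  by (intro convex_Int convex_nonneg_vec) (auto simp: convex_def sum.distrib sum_distrib_left[symmetric])

lemma compact_belief_simplex: "compact (belief_simplex :: (real^'n::finite) set)"
proof -
  have "belief_simplex = cbox (0::real^'n) 1 \<inter> {p. (\<Sum>i\<in>UNIV. p $ i) = 1}"
    by (auto simp: belief_simplex_def mem_box_cart)
  moreover have "closed {p::real^'n. (\<Sum>i\<in>UNIV. p $ i) = 1}"
    by (intro closed_Collect_eq continuous_intros)
  ultimately show ?thesis by (metis compact_Int_closed compact_cbox)
qed

lemma belief_simplex_nonempty: "(belief_simplex :: (real^'n::finite) set) \<noteq> {}"
proof -
  have "(\<chi> i. 1 / real CARD('n)) \<in> (belief_simplex :: (real^'n) set)"
    by (auto simp: belief_simplex_def)
  then show ?thesis by blast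
qed

lemma sum_nonneg_vec_eq_0_iff:
  fixes q :: "real^'n::finite"
  assumes "0 \<le> q"
  shows "(\<Sum>i\<in>UNIV. q $ i) = 0 \<longleftrightarrow> q = 0"
  using assms sum_nonneg_eq_0_iff[of UNIV "\<lambda>i. q $ i"] by (auto simp: less_eq_vec_def vec_eq_iff)

lemma normalized_in_belief_simplex:
  fixes q :: "real^'n::finite"
  assumes "0 \<le> q" "0 < (\<Sum>i\<in>UNIV. q $ i)"
  shows "(1 / (\<Sum>i\<in>UNIV. q $ i)) *\<^sub>R q \<in> belief_simplex"
  using assms by (auto simp: belief_simplex_eq less_eq_vec_def sum_divide_distrib[symmetric])

lemma linear_weighted_sum: "linear (\<lambda>p::real^'n::finite. \<Sum>i\<in>UNIV. p $ i * w i)"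
  by (rule linearI) (simp_all add: sum.distrib sum_distrib_left algebra_simps)

lemma linear_scale_coordinates: "linear (\<lambda>p::real^'n::finite. \<chi> j. a j * p $ j)"
  by (rule linearI) (simp_all add: vec_eq_iff algebra_simps)

text \<open>The perspective of g with the total mass as scaling variable: the extension of g from
  the simplex to the nonnegative orthant that is positively homogeneous of degree one.\<close>

definition perspective :: "(real^'n::finite \<Rightarrow> real) \<Rightarrow> real^'n \<Rightarrow> real" where
  "perspective g q = (\<Sum>i\<in>UNIV. q $ i) * g ((1 / (\<Sum>i\<in>UNIV. q $ i)) *\<^sub>R q)"

lemma perspective_scaleR:
  assumes "0 \<le> a"
  shows "perspective g (a *\<^sub>R q) = a * perspective g q"
  using assms by (cases "a = 0") (auto simp: perspective_def sum_distrib_left[symmetric])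

lemma concave_on_perspective:
  fixes g :: "real^'n::finite \<Rightarrow> real"
  assumes g: "concave_on belief_simplex g"
  shows "concave_on {0..} (perspective g)"
  unfolding concave_on_iff
proof (intro conjI ballI allI impI convex_nonneg_vec)
  fix q1 q2 :: "real^'n" and u v :: real
  assume q1: "q1 \<in> {0..}" and q2: "q2 \<in> {0..}" and u: "0 \<le> u" and v: "0 \<le> v" and uv: "u + v = 1"
  define s1 where "s1 = (\<Sum>i\<in>UNIV. q1 $ i)"
  define s2 where "s2 = (\<Sum>i\<in>UNIV. q2 $ i)"
  have s1: "0 \<le> s1" and s2: "0 \<le> s2"
    using q1 q2 by (auto simp: s1_def s2_def less_eq_vec_def intro: sum_nonneg)
  have weight1: "u * perspective g q1 = (u * s1) * g ((1 / s1) *\<^sub>R q1)"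
   and weight2: "v * perspective g q2 = (v * s2) * g ((1 / s2) *\<^sub>R q2)"
    by (simp_all add: perspective_def s1_def s2_def)
  have null1: "u *\<^sub>R q1 = 0" if "u * s1 = 0"
    using that q1 sum_nonneg_vec_eq_0_iff[of q1] by (auto simp: s1_def)
  have null2: "v *\<^sub>R q2 = 0" if "v * s2 = 0"
    using that q2 sum_nonneg_vec_eq_0_iff[of q2] by (auto simp: s2_def)
  show "u * perspective g q1 + v * perspective g q2 \<le> perspective g (u *\<^sub>R q1 + v *\<^sub>R q2)"
  proof (cases "u * s1 = 0 \<or> v * s2 = 0")
    case True
    then show ?thesis
      using null1 null2 weight1 weight2 perspective_scaleR[OF u, of g q1] perspective_scaleR[OF v, of g q2]
      by auto
  next
    case False
    with u v s1 s2 have pos1: "0 < u * s1" and pos2: "0 < v * s2" by auto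
    define s where "s = u * s1 + v * s2"
    define z1 where "z1 = (1 / s1) *\<^sub>R q1"
    define z2 where "z2 = (1 / s2) *\<^sub>R q2"
    have s: "0 < s" using pos1 pos2 by (simp add: s_def)
    have z: "z1 \<in> belief_simplex" "z2 \<in> belief_simplex"
      using q1 q2 pos1 pos2 u v normalized_in_belief_simplex[of q1] normalized_in_belief_simplex[of q2]
      by (auto simp: z1_def z2_def s1_def s2_def zero_less_mult_iff)
    have sum_comb: "(\<Sum>i\<in>UNIV. (u *\<^sub>R q1 + v *\<^sub>R q2) $ i) = s"
      by (simp add: s_def s1_def s2_def sum.distrib sum_distrib_left)
    have comb: "(1 / s) *\<^sub>R (u *\<^sub>R q1 + v *\<^sub>R q2) = (u * s1 / s) *\<^sub>R z1 + (v * s2 / s) *\<^sub>R z2"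
      using pos1 pos2 by (auto simp: z1_def z2_def scaleR_add_right)
    have weights: "0 \<le> u * s1 / s" "0 \<le> v * s2 / s" "u * s1 / s + v * s2 / s = 1"
      using pos1 pos2 s by (simp_all add: s_def add_divide_distrib[symmetric])
    have "(u * s1 / s) * g z1 + (v * s2 / s) * g z2 \<le> g ((u * s1 / s) *\<^sub>R z1 + (v * s2 / s) *\<^sub>R z2)"
      using g z weights unfolding concave_on_iff by blast
    then have "s * ((u * s1 / s) * g z1 + (v * s2 / s) * g z2)
        \<le> s * g ((1 / s) *\<^sub>R (u *\<^sub>R q1 + v *\<^sub>R q2))"
      using s by (simp add: comb)
    also have "\<dots> = perspective g (u *\<^sub>R q1 + v *\<^sub>R q2)"
      unfolding perspective_def sum_comb ..
    finally show ?thesis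
      using s by (simp add: weight1 weight2 z1_def z2_def algebra_simps)
  qed
qed

lemma abs_perspective_le:
  assumes K: "\<And>p. p \<in> belief_simplex \<Longrightarrow> \<bar>g p\<bar> \<le> K" and q: "0 \<le> q"
  shows "\<bar>perspective g q\<bar> \<le> K * (\<Sum>i\<in>UNIV. q $ i)"
proof (cases "(\<Sum>i\<in>UNIV. q $ i) = 0")
  case True
  then show ?thesis by (simp add: perspective_def)
next
  case False
  with q have s: "0 < (\<Sum>i\<in>UNIV. q $ i)"
    by (simp add: less_eq_vec_def order_less_le sum_nonneg)
  have "\<bar>perspective g q\<bar> = (\<Sum>i\<in>UNIV. q $ i) * \<bar>g ((1 / (\<Sum>i\<in>UNIV. q $ i)) *\<^sub>R q)\<bar>"
    using s by (simp add: perspective_def abs_mult)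
  also have "\<dots> \<le> (\<Sum>i\<in>UNIV. q $ i) * K"
    using s K[OF normalized_in_belief_simplex[OF q s]] by (intro mult_left_mono) auto
  finally show ?thesis by (simp add: mult.commute)
qed

lemma bounded_on_belief_simplex:
  fixes g :: "real^'n::finite \<Rightarrow> real"
  assumes "continuous_on belief_simplex g"
  obtains K where "\<And>p. p \<in> belief_simplex \<Longrightarrow> \<bar>g p\<bar> \<le> K"
  using compact_imp_bounded[OF compact_continuous_image[OF assms compact_belief_simplex]]
  unfolding bounded_iff by auto

lemma continuous_on_perspective:
  fixes g :: "real^'n::finite \<Rightarrow> real"
  assumes g: "continuous_on belief_simplex g"
  shows "continuous_on {0..} (perspective g)"
  unfolding continuous_on_def
proof
  obtain K where K: "\<And>p. p \<in> belief_simplex \<Longrightarrow> \<bar>g p\<bar> \<le> K"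
    using bounded_on_belief_simplex[OF g] by blast
  fix q :: "real^'n" assume q: "q \<in> {0..}"
  have in_domain: "\<forall>\<^sub>F r in at q within {0..}. 0 \<le> r"
    by (simp add: eventually_at_filter)
  have sum_tendsto: "((\<lambda>r. \<Sum>i\<in>UNIV. r $ i) \<longlongrightarrow> (\<Sum>i\<in>UNIV. q $ i)) (at q within {0..})"
    by (intro tendsto_intros)
  show "(perspective g \<longlongrightarrow> perspective g q) (at q within {0..})"
  proof (cases "(\<Sum>i\<in>UNIV. q $ i) = 0")
    case True
    \<comment> \<open>at the origin, perspective g is squeezed by its bound K times the mass\<close>
    have "(perspective g \<longlongrightarrow> 0) (at q within {0..})"
    proof (rule Lim_null_comparison)
      show "\<forall>\<^sub>F r in at q within {0..}. norm (perspective g r) \<le> K * (\<Sum>i\<in>UNIV. r $ i)"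
        using in_domain by eventually_elim (simp add: abs_perspective_le[OF K])
      show "((\<lambda>r. K * (\<Sum>i\<in>UNIV. r $ i)) \<longlongrightarrow> 0) (at q within {0..})"
        using tendsto_mult_left[OF sum_tendsto, of K] True by simp
    qed
    then show ?thesis using True by (simp add: perspective_def)
  next
    case False
    with q have s: "0 < (\<Sum>i\<in>UNIV. q $ i)"
      by (simp add: less_eq_vec_def order_less_le sum_nonneg)
    have "\<forall>\<^sub>F r in at q within {0..}. (1 / (\<Sum>i\<in>UNIV. r $ i)) *\<^sub>R r \<in> belief_simplex"
      using in_domain order_tendstoD(1)[OF sum_tendsto s]
      by eventually_elim (rule normalized_in_belief_simplex)
    then have "((\<lambda>r. g ((1 / (\<Sum>i\<in>UNIV. r $ i)) *\<^sub>R r))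
        \<longlongrightarrow> g ((1 / (\<Sum>i\<in>UNIV. q $ i)) *\<^sub>R q)) (at q within {0..})"
      using s normalized_in_belief_simplex[of q] q
      by (intro continuous_on_tendsto_compose[OF g] tendsto_intros) auto
    then show ?thesis
      unfolding perspective_def by (intro tendsto_mult sum_tendsto)
  qed
qed

lemma borel_measurable_perspective:
  fixes g :: "real^'n::finite \<Rightarrow> real"
  assumes g: "continuous_on belief_simplex g" and f: "f \<in> borel_measurable M"
    and nonneg: "\<And>y. y \<in> space M \<Longrightarrow> 0 \<le> f y"
  shows "(\<lambda>y. perspective g (f y)) \<in> borel_measurable M"
proof -
  have "(\<lambda>q. indicator {0..} q *\<^sub>R perspective g q) \<in> borel_measurable borel"
    by (intro borel_measurable_continuous_on_indicator continuous_on_perspective g borel_closed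
        closed_eucl_atLeast)
  from measurable_compose[OF f this]
  show ?thesis by (rule measurable_cong[THEN iffD1, rotated]) (simp add: nonneg)
qed

definition shannon_entropy :: "real^'n::finite \<Rightarrow> real" where
  "shannon_entropy p = - (\<Sum>i\<in>UNIV. p $ i * ln (p $ i))"

lemma concave_on_shannon_entropy: "concave_on {0..} (shannon_entropy :: real^'n::finite \<Rightarrow> real)"
proof -
  have "concave_on {0..} (\<lambda>x::real. - (x * ln x))"
    using convex_on_x_ln_x by (simp add: convex_on_iff_concave)
  then have "concave_on {0..} (\<lambda>p::real^'n. - (p $ i * ln (p $ i)))" for i
    by (rule concave_on_compose_linear)
       (auto simp: convex_nonneg_vec less_eq_vec_def intro: linearI)
  then show ?thesis
    unfolding shannon_entropy_def sum_negf[symmetric]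
    by (intro concave_on_sum_fun convex_nonneg_vec) auto
qed

lemma continuous_on_shannon_entropy:
  "continuous_on {0..} (shannon_entropy :: real^'n::finite \<Rightarrow> real)"
  unfolding shannon_entropy_def
  by (intro continuous_intros continuous_on_compose2[OF continuous_on_x_ln_x])
     (auto simp: less_eq_vec_def)

lemma plogq_eq: "plogq a b = a * ln (a / b)"
  by (simp add: plogq_def)

lemma perspective_shannon_entropy:
  "perspective shannon_entropy q = - (\<Sum>j\<in>UNIV. plogq (q $ j) (\<Sum>l\<in>UNIV. q $ l))"
  by (cases "(\<Sum>l\<in>UNIV. q $ l) = 0")
     (simp_all add: perspective_def shannon_entropy_def plogq_eq sum_distrib_left)

lemma gT_eq: "gT cT p = shannon_entropy p + (\<Sum>i\<in>UNIV. p $ i * cT i)"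
  by (simp add: gT_def shannon_entropy_def plogq_eq)

lemma gk_eq:
  "gk A c k p u = (\<Sum>i\<in>UNIV. perspective shannon_entropy (\<chi> j. A u i j * p $ j))
     + (\<Sum>i\<in>UNIV. p $ i * c k i u)"
  by (simp add: gk_def perspective_shannon_entropy sum_negf)

lemma concave_on_shannon_entropy_belief_simplex:
  "concave_on belief_simplex (shannon_entropy :: real^'n::finite \<Rightarrow> real)"
  using concave_on_shannon_entropy belief_simplex_subset_nonneg convex_belief_simplex
  by (rule concave_on_subset)

lemma concave_on_gT: "concave_on belief_simplex (gT cT :: real^'n::finite \<Rightarrow> real)"
  unfolding gT_eq[abs_def]
  by (intro concave_on_add concave_on_shannon_entropy_belief_simplex concave_on_linear
      linear_weighted_sum convex_belief_simplex)

lemma continuous_on_gT: "continuous_on belief_simplex (gT cT :: real^'n::finite \<Rightarrow> real)"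
  unfolding gT_eq[abs_def]
  by (intro continuous_intros continuous_on_subset[OF continuous_on_shannon_entropy]
      belief_simplex_subset_nonneg)

lemma concave_on_perspective_shannon_entropy_scaled:
  assumes "\<And>j. 0 \<le> a j"
  shows "concave_on belief_simplex (\<lambda>p::real^'n::finite. perspective shannon_entropy (\<chi> j. a j * p $ j))"
  using assms belief_simplex_subset_nonneg
  by (intro concave_on_compose_linear[OF concave_on_perspective] linear_scale_coordinates
      convex_belief_simplex concave_on_shannon_entropy_belief_simplex)
     (auto simp: less_eq_vec_def)

lemma concave_on_gk:
  fixes A :: "'u \<Rightarrow> 'n::finite \<Rightarrow> 'n \<Rightarrow> real"
  assumes "\<And>u i j. 0 \<le> A u i j"
  shows "concave_on belief_simplex (\<lambda>p. gk A c k p u)"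
  unfolding gk_eq
proof (rule concave_on_add)
  show "concave_on belief_simplex
      (\<lambda>p. \<Sum>i\<in>UNIV. perspective shannon_entropy (\<chi> j. A u i j * p $ j))"
    using assms
    by (intro concave_on_sum_fun concave_on_perspective_shannon_entropy_scaled convex_belief_simplex) auto
  show "concave_on belief_simplex (\<lambda>p. \<Sum>i\<in>UNIV. p $ i * c k i u)"
    by (intro concave_on_linear linear_weighted_sum convex_belief_simplex)
qed

lemma continuous_on_gk:
  fixes A :: "'u \<Rightarrow> 'n::finite \<Rightarrow> 'n \<Rightarrow> real"
  assumes "\<And>u i j. 0 \<le> A u i j"
  shows "continuous_on belief_simplex (\<lambda>p. gk A c k p u)"
  unfolding gk_eq using assms belief_simplex_subset_nonneg
  by (intro continuous_intros continuous_on_compose2[OF continuous_on_perspective[OF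
      continuous_on_subset[OF continuous_on_shannon_entropy belief_simplex_subset_nonneg]]])
     (auto simp: less_eq_vec_def)

definition unnormalized_filt :: "('u \<Rightarrow> 'n \<Rightarrow> 'n \<Rightarrow> real) \<Rightarrow> ('u \<Rightarrow> 'n \<Rightarrow> 'y \<Rightarrow> real)
    \<Rightarrow> real^'n::finite \<Rightarrow> 'u \<Rightarrow> 'y \<Rightarrow> real^'n" where
  "unnormalized_filt A B p u y = (\<chi> i. B u i y * (\<Sum>j\<in>UNIV. A u i j * p $ j))"

lemma obs_density_eq_sum_unnormalized_filt:
  "obs_density A B p u y = (\<Sum>i\<in>UNIV. unnormalized_filt A B p u y $ i)"
  by (simp add: obs_density_def unnormalized_filt_def sum_distrib_left mult.assoc)

lemma filt_eq_normalized:
  "filt A B p u y = (1 / obs_density A B p u y) *\<^sub>R unnormalized_filt A B p u y"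
  by (simp add: filt_def obs_density_def unnormalized_filt_def vec_eq_iff mult.assoc)

lemma filt_integrand_eq_perspective:
  "J (filt A B p u y) * obs_density A B p u y = perspective J (unnormalized_filt A B p u y)"
  by (simp add: perspective_def filt_eq_normalized obs_density_eq_sum_unnormalized_filt)

lemma linear_unnormalized_filt: "linear (\<lambda>p. unnormalized_filt A B p u y)"
  by (rule linearI)
     (simp_all add: unnormalized_filt_def vec_eq_iff sum.distrib sum_distrib_left algebra_simps)

locale controlled_hmm =
  fixes A :: "'u::finite \<Rightarrow> 'n::finite \<Rightarrow> 'n \<Rightarrow> real"
    and B :: "'u \<Rightarrow> 'n \<Rightarrow> 'y \<Rightarrow> real"
    and M :: "'y measure"
  assumes A_nonneg: "\<And>u i j. 0 \<le> A u i j"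
    and A_stoch: "\<And>u j. (\<Sum>i\<in>UNIV. A u i j) = 1"
    and B_meas: "\<And>u i. B u i \<in> borel_measurable M"
    and B_nonneg: "\<And>u i y. y \<in> space M \<Longrightarrow> 0 \<le> B u i y"
    and B_dens: "\<And>u i. (\<integral>\<^sup>+ y. ennreal (B u i y) \<partial>M) = 1"
begin

lemma predicted_belief_nonneg: "p \<in> belief_simplex \<Longrightarrow> 0 \<le> (\<Sum>j\<in>UNIV. A u i j * p $ j)"
  using A_nonneg by (auto simp: belief_simplex_def intro!: sum_nonneg)

lemma predicted_belief_le_1: "p \<in> belief_simplex \<Longrightarrow> (\<Sum>j\<in>UNIV. A u i j * p $ j) \<le> 1"
proof -
  assume p: "p \<in> belief_simplex"
  have "(\<Sum>j\<in>UNIV. A u i j * p $ j) \<le> (\<Sum>i'\<in>UNIV. \<Sum>j\<in>UNIV. A u i' j * p $ j)"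
    using predicted_belief_nonneg[OF p] by (intro member_le_sum) auto
  also have "\<dots> = (\<Sum>j\<in>UNIV. (\<Sum>i'\<in>UNIV. A u i' j) * p $ j)"
    by (subst sum.swap) (simp add: sum_distrib_right)
  also have "\<dots> = 1"
    using p by (simp add: A_stoch sum_belief_simplex)
  finally show ?thesis .
qed

lemma unnormalized_filt_nonneg:
  "p \<in> belief_simplex \<Longrightarrow> y \<in> space M \<Longrightarrow> 0 \<le> unnormalized_filt A B p u y"
  using B_nonneg predicted_belief_nonneg by (simp add: unnormalized_filt_def less_eq_vec_def)

lemma sum_unnormalized_filt_le:
  "p \<in> belief_simplex \<Longrightarrow> y \<in> space M
    \<Longrightarrow> (\<Sum>i\<in>UNIV. unnormalized_filt A B p u y $ i) \<le> (\<Sum>i\<in>UNIV. B u i y)"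
  unfolding unnormalized_filt_def
  using B_nonneg predicted_belief_le_1 by (auto intro!: sum_mono simp: mult_left_le)

lemma borel_measurable_unnormalized_filt:
  "(\<lambda>y. unnormalized_filt A B p u y) \<in> borel_measurable M"
  unfolding unnormalized_filt_def
  by (intro borel_measurable_vec_lambda borel_measurable_times B_meas borel_measurable_const)

lemma integrable_sum_B: "integrable M (\<lambda>y. \<Sum>i\<in>UNIV. B u i y)"
proof (rule Bochner_Integration.integrable_sum)
  show "integrable M (B u i)" for i
    by (rule integrableI_nonneg) (auto simp: B_dens B_nonneg B_meas intro!: AE_I2)
qed

context
  fixes J :: "real^'n \<Rightarrow> real"
  assumes J_concave: "concave_on belief_simplex J"
    and J_continuous: "continuous_on belief_simplex J"
begin

lemma abs_perspective_unnormalized_filt_le: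
  obtains K where "\<And>p u y. p \<in> belief_simplex \<Longrightarrow> y \<in> space M
      \<Longrightarrow> \<bar>perspective J (unnormalized_filt A B p u y)\<bar> \<le> K * (\<Sum>i\<in>UNIV. B u i y)"
proof -
  obtain K where K: "\<And>p. p \<in> belief_simplex \<Longrightarrow> \<bar>J p\<bar> \<le> K"
    using bounded_on_belief_simplex[OF J_continuous] by blast
  then have "0 \<le> K"
    using belief_simplex_nonempty by (meson abs_ge_zero all_not_in_conv order_trans)
  have "\<bar>perspective J (unnormalized_filt A B p u y)\<bar> \<le> K * (\<Sum>i\<in>UNIV. B u i y)"
    if "p \<in> belief_simplex" "y \<in> space M" for p u y
  proof -
    have "\<bar>perspective J (unnormalized_filt A B p u y)\<bar>
        \<le> K * (\<Sum>i\<in>UNIV. unnormalized_filt A B p u y $ i)"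
      using K unnormalized_filt_nonneg[OF that] by (rule abs_perspective_le)
    also have "\<dots> \<le> K * (\<Sum>i\<in>UNIV. B u i y)"
      using sum_unnormalized_filt_le[OF that] \<open>0 \<le> K\<close> by (rule mult_left_mono)
    finally show ?thesis .
  qed
  then show ?thesis by (rule that)
qed

lemma borel_measurable_perspective_unnormalized_filt:
  "p \<in> belief_simplex \<Longrightarrow> (\<lambda>y. perspective J (unnormalized_filt A B p u y)) \<in> borel_measurable M"
  by (intro borel_measurable_perspective J_continuous borel_measurable_unnormalized_filt
      unnormalized_filt_nonneg)

lemma integrable_perspective_unnormalized_filt:
  assumes "p \<in> belief_simplex"
  shows "integrable M (\<lambda>y. perspective J (unnormalized_filt A B p u y))"
proof -
  obtain K where K: "\<And>p u y. p \<in> belief_simplex \<Longrightarrow> y \<in> space M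
      \<Longrightarrow> \<bar>perspective J (unnormalized_filt A B p u y)\<bar> \<le> K * (\<Sum>i\<in>UNIV. B u i y)"
    using abs_perspective_unnormalized_filt_le by blast
  show ?thesis
  proof (rule Bochner_Integration.integrable_bound)
    show "integrable M (\<lambda>y. K * (\<Sum>i\<in>UNIV. B u i y))"
      by (intro integrable_mult_right integrable_sum_B)
    show "AE y in M. norm (perspective J (unnormalized_filt A B p u y)) \<le> norm (K * (\<Sum>i\<in>UNIV. B u i y))"
      using assms K by (auto intro!: AE_I2 order_trans[OF _ abs_ge_self])
  qed (rule borel_measurable_perspective_unnormalized_filt[OF assms])
qed

lemma concave_on_expected_cost:
  "concave_on belief_simplex (\<lambda>p. \<integral>y. perspective J (unnormalized_filt A B p u y) \<partial>M)"
proof (rule concave_on_integral[OF convex_belief_simplex])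
  show "concave_on belief_simplex (\<lambda>p. perspective J (unnormalized_filt A B p u y))"
    if "y \<in> space M" for y
    using unnormalized_filt_nonneg[OF _ that]
    by (intro concave_on_compose_linear[OF concave_on_perspective[OF J_concave]]
        linear_unnormalized_filt convex_belief_simplex) auto
qed (rule integrable_perspective_unnormalized_filt)

lemma continuous_on_expected_cost:
  "continuous_on belief_simplex (\<lambda>p. \<integral>y. perspective J (unnormalized_filt A B p u y) \<partial>M)"
proof -
  obtain K where K: "\<And>p u y. p \<in> belief_simplex \<Longrightarrow> y \<in> space M
      \<Longrightarrow> \<bar>perspective J (unnormalized_filt A B p u y)\<bar> \<le> K * (\<Sum>i\<in>UNIV. B u i y)"
    using abs_perspective_unnormalized_filt_le by blast
  have "continuous_on belief_simplex (\<lambda>p. perspective J (unnormalized_filt A B p u y))"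
    if "y \<in> space M" for y
    using unnormalized_filt_nonneg[OF _ that]
    by (intro continuous_on_compose2[OF continuous_on_perspective[OF J_continuous]]
        linear_continuous_on linear_conv_bounded_linear[THEN iffD1] linear_unnormalized_filt) auto
  then show ?thesis
    using K
    by (intro continuous_on_integral_dominated[OF borel_measurable_perspective_unnormalized_filt
        integrable_mult_right[OF integrable_sum_B]])
qed

lemma Bellman_update_concave_continuous:
  fixes c :: "nat \<Rightarrow> 'n \<Rightarrow> 'u \<Rightarrow> real" and k :: nat
  defines "J' \<equiv> \<lambda>p. Min (range (\<lambda>u. gk A c k p u +
      (\<integral>y. J (filt A B p u y) * obs_density A B p u y \<partial>M)))"
  shows "concave_on belief_simplex J'" and "continuous_on belief_simplex J'"
  unfolding J'_def filt_integrand_eq_perspective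
  by (intro concave_on_Min concave_on_add concave_on_gk A_nonneg concave_on_expected_cost
      continuous_on_Min continuous_on_add continuous_on_gk continuous_on_expected_cost; simp)+

end

lemma Jrem_concave_continuous:
  "concave_on belief_simplex (Jrem A B M cT c T n) \<and> continuous_on belief_simplex (Jrem A B M cT c T n)"
proof (induction n)
  case 0
  then show ?case by (simp add: concave_on_gT continuous_on_gT)
next
  case (Suc n)
  then show ?case
    using Bellman_update_concave_continuous[of "Jrem A B M cT c T n" c "T - Suc n"]
    by simp
qed

end

theorem theorem2:
  fixes A :: "'u::finite \<Rightarrow> 'n::finite \<Rightarrow> 'n \<Rightarrow> real"
    and B :: "'u \<Rightarrow> 'n \<Rightarrow> 'y \<Rightarrow> real"
    and M :: "'y measure"
    and cT :: "'n \<Rightarrow> real"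
    and c :: "nat \<Rightarrow> 'n \<Rightarrow> 'u \<Rightarrow> real"
    and T k :: nat
  assumes A_nonneg: "\<And>u i j. 0 \<le> A u i j"
    and A_stoch: "\<And>u j. (\<Sum>i\<in>UNIV. A u i j) = 1"
    and B_meas: "\<And>u i. B u i \<in> borel_measurable M"
    and B_nonneg: "\<And>u i y. y \<in> space M \<Longrightarrow> 0 \<le> B u i y"
    and B_dens: "\<And>u i. (\<integral>\<^sup>+ y. ennreal (B u i y) \<partial>M) = 1"
    and cT_nonneg: "\<And>i. 0 \<le> cT i"
    and c_nonneg: "\<And>k i u. 0 \<le> c k i u"
    and "k \<le> T"
  shows "concave_on belief_simplex (Jval A B M cT c T k)"
proof -
  interpret controlled_hmm A B M
    using A_nonneg A_stoch B_meas B_nonneg B_dens by unfold_locales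
  show ?thesis
    unfolding Jval_def using Jrem_concave_continuous by blast
qed

end
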